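(* Let $X$ be a finite set and $f\in\mathrm{Bool}(X)$ with $f(Y)\in\mathbb{N}$ for every $Y\subseteq X$. Then $\theta_1(f)$, defined by $\theta_1(f)(A)=\sum_{B\subseteq A}f(B)$, is rigid.
   Context: A boolean function on a finite set $X$ is a map $f:\mathcal{P}(X)\to\mathbb{Z}$ with $f(\emptyset)=0$; $\mathrm{Bool}(X)$ is their set; $f_{\mid Y}$ is the restriction to $\mathcal{P}(Y)$. For disjoint $X,Y$, $(f\star_1g)(A)=f(A\cap X)+g(A\cap Y)$. For nonempty $X$, $f$ is indecomposable if $f=f'\star_1f''$ with $f'\in\mathrm{Bool}(X\setminus Y)$, $f''\in\mathrm{Bool}(Y)$ forces $Y\in\{\emptyset,X\}$. Each $f$ determines a unique equivalence $\sim_f^i$ with $f=\prod^{\star_1}_{Y\in X/\sim_f^i}f_{\mid Y}$ and each $f_{\mid Y}$ indecomposable; its classes are the indecomposable components of $f$. An indecomposable $f\in\mathrm{Bool}(X)$ is rigid if for all disjoint $A,B\subseteq X$ with $f(A\sqcup B)=f(A)+f(B)$, one has $f(A'\sqcup B')=f(A')+f(B')$ for all $A'\subseteq A$, $B'\subseteq B$. A general $f\in\mathrm{Bool}(X)$ is rigid if $f_{\mid Y}$ is rigid for each indecomposable component $Y$ of $f$. *)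

theory Defs
  imports Main "HOL-Library.Disjoint_Sets"
begin

text \<open>A boolean function on the finite set X is modelled by f :: 'a set \<Rightarrow> int,
  of which only the values on subsets of X matter; the restriction to P(Y) is the
  same function considered on subsets of Y.\<close>

definition bool_fun :: "'a set \<Rightarrow> ('a set \<Rightarrow> int) \<Rightarrow> bool" where
  "bool_fun X f \<longleftrightarrow> f {} = 0"

definition star1 :: "'a set \<Rightarrow> ('a set \<Rightarrow> int) \<Rightarrow> 'a set \<Rightarrow> ('a set \<Rightarrow> int) \<Rightarrow> 'a set \<Rightarrow> int" where
  "star1 X f Y g = (\<lambda>A. f (A \<inter> X) + g (A \<inter> Y))"

definition indecomposable :: "'a set \<Rightarrow> ('a set \<Rightarrow> int) \<Rightarrow> bool" where
  "indecomposable X f \<longleftrightarrow> X \<noteq> {} \<and>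
     (\<forall>Y f' f''. Y \<subseteq> X \<and> bool_fun (X - Y) f' \<and> bool_fun Y f'' \<and>
        (\<forall>A. A \<subseteq> X \<longrightarrow> f A = star1 (X - Y) f' Y f'' A) \<longrightarrow> Y = {} \<or> Y = X)"

definition indec_components :: "'a set \<Rightarrow> ('a set \<Rightarrow> int) \<Rightarrow> 'a set set" where
  "indec_components X f = (THE P. partition_on X P \<and>
      (\<forall>A. A \<subseteq> X \<longrightarrow> f A = (\<Sum>Y\<in>P. f (A \<inter> Y))) \<and>
      (\<forall>Y\<in>P. indecomposable Y f))"

definition rigid_indec :: "'a set \<Rightarrow> ('a set \<Rightarrow> int) \<Rightarrow> bool" where
  "rigid_indec X f \<longleftrightarrow>
     (\<forall>A B. A \<subseteq> X \<and> B \<subseteq> X \<and> A \<inter> B = {} \<and> f (A \<union> B) = f A + f B \<longrightarrow>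
        (\<forall>A' B'. A' \<subseteq> A \<and> B' \<subseteq> B \<longrightarrow> f (A' \<union> B') = f A' + f B'))"

definition rigid :: "'a set \<Rightarrow> ('a set \<Rightarrow> int) \<Rightarrow> bool" where
  "rigid X f \<longleftrightarrow> (\<forall>Y\<in>indec_components X f. rigid_indec Y f)"

definition theta1 :: "('a set \<Rightarrow> int) \<Rightarrow> 'a set \<Rightarrow> int" where
  "theta1 f A = (\<Sum>B\<in>Pow A. f B)"

end

theory Submission
  imports Defs
begin

text \<open>For disjoint \<open>A\<close>, \<open>B\<close> the defect \<open>\<theta>\<^sub>1(f)(A \<union> B) - \<theta>\<^sub>1(f)(A) - \<theta>\<^sub>1(f)(B)\<close> is the sum
  of \<open>f(C)\<close> over the subsets \<open>C \<subseteq> A \<union> B\<close> meeting both \<open>A\<close> and \<open>B\<close>. For \<open>f \<ge> 0\<close> this defect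
  vanishes only if every such \<open>f(C)\<close> vanishes, and the subsets meeting both \<open>A' \<subseteq> A\<close> and
  \<open>B' \<subseteq> B\<close> are among them; so \<open>\<theta>\<^sub>1(f)\<close> is rigid on every subset of \<open>X\<close>. What remains is
  to know that the indecomposable components (a definite description) exist, are unique and
  hence are subsets of \<open>X\<close>.\<close>

definition splits_at :: "('a set \<Rightarrow> int) \<Rightarrow> 'a set \<Rightarrow> 'a set \<Rightarrow> bool" where
  "splits_at g Y Z \<longleftrightarrow> (\<forall>A. A \<subseteq> Y \<longrightarrow> g A = g (A - Z) + g (A \<inter> Z))"

lemma splits_at_subset: "splits_at g X Z \<Longrightarrow> Y \<subseteq> X \<Longrightarrow> splits_at g Y Z"
  unfolding splits_at_def by blast

lemma indecomposable_splits_at: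
  assumes "g {} = 0" and "indecomposable Y g" and "splits_at g Y Z"
  shows "Y \<inter> Z = {} \<or> Y \<subseteq> Z"
proof -
  have "g A = star1 (Y - Y \<inter> Z) g (Y \<inter> Z) g A" if "A \<subseteq> Y" for A
  proof -
    have "A \<inter> (Y - Y \<inter> Z) = A - Z" "A \<inter> (Y \<inter> Z) = A \<inter> Z" using that by blast+
    then show ?thesis using assms(3) that unfolding splits_at_def star1_def by simp
  qed
  moreover have "bool_fun (Y - Y \<inter> Z) g" "bool_fun (Y \<inter> Z) g"
    using assms(1) by (simp_all add: bool_fun_def)
  ultimately have "Y \<inter> Z = {} \<or> Y \<inter> Z = Y"
    using assms(2) unfolding indecomposable_def by (metis Int_lower1)
  then show ?thesis by blast
qed

lemma not_indecomposable_splits_at: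
  assumes "Y \<noteq> {}" and "\<not> indecomposable Y g"
  obtains Z where "Z \<noteq> {}" and "Z \<subset> Y" and "splits_at g Y Z"
proof -
  obtain Z f' f'' where "Z \<subseteq> Y" "Z \<noteq> {}" "Z \<noteq> Y" "f' {} = 0" "f'' {} = 0"
    and f_star: "\<And>A. A \<subseteq> Y \<Longrightarrow> g A = f' (A \<inter> (Y - Z)) + f'' (A \<inter> Z)"
    using assms unfolding indecomposable_def bool_fun_def star1_def by blast
  moreover have "g A = g (A - Z) + g (A \<inter> Z)" if "A \<subseteq> Y" for A
  proof -
    have "A - Z \<subseteq> Y" "(A - Z) \<inter> (Y - Z) = A \<inter> (Y - Z)" "(A - Z) \<inter> Z = {}"
      and "A \<inter> Z \<subseteq> Y" "(A \<inter> Z) \<inter> (Y - Z) = {}" "(A \<inter> Z) \<inter> Z = A \<inter> Z"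
      using that by blast+
    then have "g (A - Z) = f' (A \<inter> (Y - Z))" and "g (A \<inter> Z) = f'' (A \<inter> Z)"
      using f_star \<open>f' {} = 0\<close> \<open>f'' {} = 0\<close> by simp_all
    then show ?thesis using f_star[OF that] by simp
  qed
  ultimately show ?thesis using that unfolding splits_at_def by blast
qed

definition star_decomposition :: "'a set \<Rightarrow> ('a set \<Rightarrow> int) \<Rightarrow> 'a set set \<Rightarrow> bool" where
  "star_decomposition X g P \<longleftrightarrow>
     partition_on X P \<and> (\<forall>A. A \<subseteq> X \<longrightarrow> g A = (\<Sum>Y\<in>P. g (A \<inter> Y)))"

lemma star_decomposition_block_splits_at:
  assumes "g {} = 0" and "finite X" and dec: "star_decomposition X g Q" and "Z \<in> Q"
  shows "splits_at g X Z"
  unfolding splits_at_def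
proof (intro allI impI)
  fix A assume "A \<subseteq> X"
  have part: "partition_on X Q" and sum_eq: "\<And>B. B \<subseteq> X \<Longrightarrow> g B = (\<Sum>W\<in>Q. g (B \<inter> W))"
    using dec unfolding star_decomposition_def by blast+
  have split_Z: "g B = g (B \<inter> Z) + (\<Sum>W\<in>Q - {Z}. g (B \<inter> W))" if "B \<subseteq> X" for B
    using sum_eq[OF that] sum.remove[OF finite_elements[OF \<open>finite X\<close> part] \<open>Z \<in> Q\<close>] by simp
  have "A - Z \<subseteq> X" using \<open>A \<subseteq> X\<close> by blast
  have "(A - Z) \<inter> W = A \<inter> W" if "W \<in> Q - {Z}" for W
    using disjointD[OF partition_onD2[OF part] _ \<open>Z \<in> Q\<close>] that by blast
  then have "(\<Sum>W\<in>Q - {Z}. g ((A - Z) \<inter> W)) = (\<Sum>W\<in>Q - {Z}. g (A \<inter> W))"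
    by (intro sum.cong) simp_all
  moreover have "(A - Z) \<inter> Z = {}" by blast
  ultimately have "g (A - Z) = (\<Sum>W\<in>Q - {Z}. g (A \<inter> W))"
    using split_Z[OF \<open>A - Z \<subseteq> X\<close>] \<open>g {} = 0\<close> by simp
  then show "g A = g (A - Z) + g (A \<inter> Z)"
    using split_Z[OF \<open>A \<subseteq> X\<close>] by simp
qed

lemma star_decomposition_Un:
  assumes "finite X" and "Z \<subseteq> X" and "splits_at g X Z"
    and dec1: "star_decomposition (X - Z) g P1" and dec2: "star_decomposition Z g P2"
  shows "star_decomposition X g (P1 \<union> P2)"
proof -
  have part1: "partition_on (X - Z) P1" and part2: "partition_on Z P2"
    using dec1 dec2 unfolding star_decomposition_def by blast+
  have sub1: "W \<subseteq> X - Z" if "W \<in> P1" for W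
    using partition_onD1[OF part1] that by blast
  have sub2: "W \<subseteq> Z" if "W \<in> P2" for W
    using partition_onD1[OF part2] that by blast
  have "finite P1" "finite P2"
    using finite_elements[OF _ part1] finite_elements[OF _ part2] \<open>finite X\<close> \<open>Z \<subseteq> X\<close>
    by (simp_all add: finite_subset)
  have "P1 \<inter> P2 = {}"
  proof (intro equals0I)
    fix W assume W: "W \<in> P1 \<inter> P2"
    then have "W = {}" using sub1[of W] sub2[of W] by auto
    then show False using partition_onD3[OF part1] W by blast
  qed
  have "\<Union>(P1 \<union> P2) = X"
    using partition_onD1[OF part1] partition_onD1[OF part2] \<open>Z \<subseteq> X\<close> by auto
  moreover have "disjoint (P1 \<union> P2)"
    using partition_onD1[OF part1] partition_onD1[OF part2]
    by (intro disjoint_union partition_onD2[OF part1] partition_onD2[OF part2]) auto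
  ultimately have part: "partition_on X (P1 \<union> P2)"
    using partition_onD3[OF part1] partition_onD3[OF part2] by (simp add: partition_on_def)
  have "g A = (\<Sum>W\<in>P1 \<union> P2. g (A \<inter> W))" if "A \<subseteq> X" for A
  proof -
    have "(A - Z) \<inter> W = A \<inter> W" if "W \<in> P1" for W
      using sub1[OF that] by blast
    moreover have "(A \<inter> Z) \<inter> W = A \<inter> W" if "W \<in> P2" for W
      using sub2[OF that] by blast
    moreover have "A - Z \<subseteq> X - Z" "A \<inter> Z \<subseteq> Z" using \<open>A \<subseteq> X\<close> by blast+
    ultimately have "g (A - Z) = (\<Sum>W\<in>P1. g (A \<inter> W))" "g (A \<inter> Z) = (\<Sum>W\<in>P2. g (A \<inter> W))"
      using dec1 dec2 unfolding star_decomposition_def by (metis (no_types, lifting) sum.cong)+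
    moreover have "g A = g (A - Z) + g (A \<inter> Z)"
      using \<open>splits_at g X Z\<close> \<open>A \<subseteq> X\<close> unfolding splits_at_def by blast
    ultimately show ?thesis
      using sum.union_disjoint[OF \<open>finite P1\<close> \<open>finite P2\<close> \<open>P1 \<inter> P2 = {}\<close>, of "\<lambda>W. g (A \<inter> W)"]
      by simp
  qed
  then show ?thesis using part unfolding star_decomposition_def by blast
qed

lemma star_decomposition_exists:
  assumes "finite X" and "g {} = 0"
  shows "\<exists>P. star_decomposition X g P \<and> (\<forall>Y\<in>P. indecomposable Y g)"
  using assms(1)
proof (induction X rule: finite_psubset_induct)
  case (psubset X)
  consider "X = {}" | "indecomposable X g" | "X \<noteq> {}" "\<not> indecomposable X g" by blast
  then show ?case
  proof cases
    case 1
    then have "star_decomposition X g {}"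
      using assms(2) by (simp add: star_decomposition_def partition_on_empty)
    then show ?thesis by blast
  next
    case 2
    then have "star_decomposition X g {X}"
      by (auto simp: star_decomposition_def indecomposable_def partition_on_space Int_absorb2)
    then show ?thesis using 2 by blast
  next
    case 3
    obtain Z where "Z \<noteq> {}" "Z \<subset> X" and split: "splits_at g X Z"
      by (rule not_indecomposable_splits_at[OF 3])
    then have "X - Z \<subset> X" by blast
    then obtain P1 where dec1: "star_decomposition (X - Z) g P1" and ind1: "\<forall>Y\<in>P1. indecomposable Y g"
      using psubset.IH by blast
    obtain P2 where dec2: "star_decomposition Z g P2" and ind2: "\<forall>Y\<in>P2. indecomposable Y g"
      using psubset.IH \<open>Z \<subset> X\<close> by blast
    have "star_decomposition X g (P1 \<union> P2)"
      using star_decomposition_Un[OF \<open>finite X\<close> _ split dec1 dec2] \<open>Z \<subset> X\<close> by blast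
    then show ?thesis using ind1 ind2 by blast
  qed
qed

lemma indecomposable_subset_block:
  assumes "g {} = 0" and "finite X" and "star_decomposition X g Q" and "Z \<in> Q"
    and "Y \<subseteq> X" and "indecomposable Y g" and "Y \<inter> Z \<noteq> {}"
  shows "Y \<subseteq> Z"
proof -
  have "splits_at g Y Z"
    using star_decomposition_block_splits_at[of g X Q Z] splits_at_subset assms(1-5) by blast
  then show ?thesis using indecomposable_splits_at[of g Y Z] assms(1,6,7) by blast
qed

lemma star_decomposition_indecomposable_subset:
  assumes "g {} = 0" and "finite X"
    and decP: "star_decomposition X g P" and indP: "\<forall>Y\<in>P. indecomposable Y g"
    and decQ: "star_decomposition X g Q" and indQ: "\<forall>Z\<in>Q. indecomposable Z g"
  shows "P \<subseteq> Q"
proof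
  fix Y assume "Y \<in> P"
  have partP: "partition_on X P" and partQ: "partition_on X Q"
    using decP decQ unfolding star_decomposition_def by blast+
  obtain x where "x \<in> Y" using \<open>Y \<in> P\<close> partition_onD3[OF partP] by (metis equals0I)
  then have "x \<in> X" using \<open>Y \<in> P\<close> partition_onD1[OF partP] by auto
  then obtain Z Y' where "Z \<in> Q" "x \<in> Z" "Y' \<in> P" "x \<in> Y'"
    using partition_onD1[OF partP] partition_onD1[OF partQ] by (metis UnionE)
  have "Y \<subseteq> X" "Z \<subseteq> X"
    using \<open>Y \<in> P\<close> \<open>Z \<in> Q\<close> partition_onD1[OF partP] partition_onD1[OF partQ] by auto
  have "Y \<subseteq> Z"
    using indecomposable_subset_block[OF assms(1,2) decQ \<open>Z \<in> Q\<close> \<open>Y \<subseteq> X\<close>] indP \<open>Y \<in> P\<close>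
      \<open>x \<in> Y\<close> \<open>x \<in> Z\<close> by blast
  moreover have "Z \<subseteq> Y'"
    using indecomposable_subset_block[OF assms(1,2) decP \<open>Y' \<in> P\<close> \<open>Z \<subseteq> X\<close>] indQ \<open>Z \<in> Q\<close>
      \<open>x \<in> Z\<close> \<open>x \<in> Y'\<close> by blast
  moreover have "Y = Y'"
    using disjointD[OF partition_onD2[OF partP] \<open>Y \<in> P\<close> \<open>Y' \<in> P\<close>] \<open>x \<in> Y\<close> \<open>x \<in> Y'\<close> by blast
  ultimately show "Y \<in> Q" using \<open>Z \<in> Q\<close> by simp
qed

lemma partition_on_indec_components:
  assumes "finite X" and "g {} = 0"
  shows "partition_on X (indec_components X g)"
proof -
  obtain P where dec: "star_decomposition X g P" and ind: "\<forall>Y\<in>P. indecomposable Y g"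
    using star_decomposition_exists[of X g, OF assms] by blast
  have "indec_components X g = P"
    unfolding indec_components_def
  proof (rule the_equality)
    fix Q assume "partition_on X Q \<and> (\<forall>A. A \<subseteq> X \<longrightarrow> g A = (\<Sum>Y\<in>Q. g (A \<inter> Y))) \<and>
      (\<forall>Y\<in>Q. indecomposable Y g)"
    then show "Q = P"
      using star_decomposition_indecomposable_subset[of g X, OF assms(2,1)] dec ind
      unfolding star_decomposition_def by (metis subset_antisym)
  qed (use dec ind in \<open>simp add: star_decomposition_def\<close>)
  then show ?thesis using dec unfolding star_decomposition_def by simp
qed

definition mixed_subsets :: "'a set \<Rightarrow> 'a set \<Rightarrow> 'a set set" where
  "mixed_subsets A B = {C. C \<subseteq> A \<union> B \<and> C \<inter> A \<noteq> {} \<and> C \<inter> B \<noteq> {}}"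

lemma mixed_subsets_mono: "A' \<subseteq> A \<Longrightarrow> B' \<subseteq> B \<Longrightarrow> mixed_subsets A' B' \<subseteq> mixed_subsets A B"
  unfolding mixed_subsets_def by blast

lemma finite_mixed_subsets: "finite A \<Longrightarrow> finite B \<Longrightarrow> finite (mixed_subsets A B)"
  by (rule finite_subset[of _ "Pow (A \<union> B)"]) (auto simp: mixed_subsets_def)

lemma theta1_Un:
  assumes "finite A" "finite B" "A \<inter> B = {}" "f {} = 0"
  shows "theta1 f (A \<union> B) = theta1 f A + theta1 f B + sum f (mixed_subsets A B)"
proof -
  have "Pow (A \<union> B) = (Pow A \<union> (Pow B - {{}})) \<union> mixed_subsets A B"
    unfolding mixed_subsets_def by blast
  moreover have "finite (mixed_subsets A B)"
    using assms(1,2) by (rule finite_mixed_subsets)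
  moreover have "(Pow A \<union> (Pow B - {{}})) \<inter> mixed_subsets A B = {}"
    "Pow A \<inter> (Pow B - {{}}) = {}"
    using \<open>A \<inter> B = {}\<close> unfolding mixed_subsets_def by blast+
  ultimately have "theta1 f (A \<union> B) = sum f (Pow A) + sum f (Pow B - {{}}) + sum f (mixed_subsets A B)"
    unfolding theta1_def using assms(1,2) by (simp add: sum.union_disjoint)
  then show ?thesis
    unfolding theta1_def using assms(2,4) by (simp add: sum_diff1)
qed

lemma rigid_indec_theta1:
  assumes "f {} = 0" and "finite Y" and nonneg: "\<forall>C. C \<subseteq> Y \<longrightarrow> f C \<ge> 0"
  shows "rigid_indec Y (theta1 f)"
  unfolding rigid_indec_def
proof (intro allI impI, elim conjE)
  fix A B A' B'
  assume "A \<subseteq> Y" "B \<subseteq> Y" "A \<inter> B = {}" and additive: "theta1 f (A \<union> B) = theta1 f A + theta1 f B"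
    and "A' \<subseteq> A" "B' \<subseteq> B"
  have "finite A" "finite B" "finite A'" "finite B'"
    using \<open>finite Y\<close> \<open>A \<subseteq> Y\<close> \<open>B \<subseteq> Y\<close> \<open>A' \<subseteq> A\<close> \<open>B' \<subseteq> B\<close> by (meson finite_subset)+
  have "sum f (mixed_subsets A B) = 0"
    using theta1_Un[of A B f, OF \<open>finite A\<close> \<open>finite B\<close> \<open>A \<inter> B = {}\<close> \<open>f {} = 0\<close>] additive by simp
  moreover have "\<forall>C\<in>mixed_subsets A B. f C \<ge> 0"
    using nonneg \<open>A \<subseteq> Y\<close> \<open>B \<subseteq> Y\<close> unfolding mixed_subsets_def by blast
  ultimately have "\<forall>C\<in>mixed_subsets A B. f C = 0"
    using sum_nonneg_eq_0_iff[OF finite_mixed_subsets[OF \<open>finite A\<close> \<open>finite B\<close>]] by blast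
  then have "sum f (mixed_subsets A' B') = 0"
    using mixed_subsets_mono[OF \<open>A' \<subseteq> A\<close> \<open>B' \<subseteq> B\<close>] by (intro sum.neutral) blast
  moreover have "A' \<inter> B' = {}" using \<open>A \<inter> B = {}\<close> \<open>A' \<subseteq> A\<close> \<open>B' \<subseteq> B\<close> by blast
  ultimately show "theta1 f (A' \<union> B') = theta1 f A' + theta1 f B'"
    using theta1_Un[of A' B' f, OF \<open>finite A'\<close> \<open>finite B'\<close> _ \<open>f {} = 0\<close>] by simp
qed

theorem proposition4p10:
  fixes X :: "'a set" and f :: "'a set \<Rightarrow> int"
  assumes "finite X"
    and "bool_fun X f"
    and "\<forall>Y. Y \<subseteq> X \<longrightarrow> f Y \<ge> 0"
  shows "rigid X (theta1 f)"
  unfolding rigid_def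
proof
  fix Y assume "Y \<in> indec_components X (theta1 f)"
  have "f {} = 0" using assms(2) by (simp add: bool_fun_def)
  then have "theta1 f {} = 0" by (simp add: theta1_def)
  then have "Y \<subseteq> X"
    using partition_on_indec_components[OF \<open>finite X\<close>] \<open>Y \<in> indec_components X (theta1 f)\<close>
    by (metis Union_upper partition_onD1)
  then show "rigid_indec Y (theta1 f)"
    using rigid_indec_theta1[of f Y] \<open>f {} = 0\<close> \<open>finite X\<close> assms(3) by (meson finite_subset order_trans)
qed

end
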